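(* Let $A\in\{0,1\}$ be a binary exposure and $M_1,\dots,M_K$ binary mediators ($K\ge 1$) whose causal dependencies among themselves form an arbitrary directed acyclic graph $G$. For each mediator $M_k$ and each $a\in\{0,1\}$ let $M_k(a)\in\{0,1\}$ denote its potential value, defined recursively by $M_k(a)=M_k\big(a,\mathrm{Pa}\{M_k\}(a)\big)$, where $\mathrm{Pa}\{M_k\}(a)=\{M_j(a)\}_{j\in \text{parents of }M_k\text{ in }G}$. Let $Y(a,m_1,\dots,m_K)$ denote the (real-valued) potential outcome when $A$ is set to $a$ and the mediators to $m_1,\dots,m_K$, and write $Y(a)=Y\big(a,M_1(a),\dots,M_K(a)\big)$, $\mathrm{TE}=Y(1)-Y(0)$. For $k=1,\dots,K$ and $a,m\in\{0,1\}$ define $$Y_k(a,m)=Y\big(a,M_1(a),\dots,M_{k-1}(a),m,M_{k+1}(a),\dots,M_K(a)\big),$$ $$\mathrm{CDE}_k(0)=Y_k(1,0)-Y_k(0,0),\quad \mathrm{CIE}_k(a)=Y_k(a,1)-Y_k(a,0),\quad \mathrm{sCIE}_k=M_k(1)\,\mathrm{CIE}_k(1)-M_k(0)\,\mathrm{CIE}_k(0).$$ Then $$\mathrm{TE}=\frac{1}{K}\sum_{k=1}^K \mathrm{CDE}_k(0)+\frac{1}{K}\sum_{k=1}^K \mathrm{sCIE}_k .$$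
   Context: Potential-outcomes framework for mediation analysis with binary exposure and binary mediators; $\mathrm{CDE}_k(0)$ is the controlled direct effect, $\mathrm{CIE}_k(a)$ the controlled indirect effect, and $\mathrm{sCIE}_k$ the scaled controlled indirect effect of the $k$-th mediator. *)

theory Defs
  imports Main "HOL-Library.Set_Algebras" Complex_Main
begin

definition is_dag :: "nat \<Rightarrow> (nat \<Rightarrow> nat set) \<Rightarrow> bool" where
  "is_dag K pa \<longleftrightarrow> (\<forall>k\<in>{1..K}. pa k \<subseteq> {1..K}) \<and>
     acyclic {(j, k). k \<in> {1..K} \<and> j \<in> pa k}"

text \<open>Structural potential value M_k(a, pa): Mf k a v, where v gives the values of the parents.
  Mpot k a is the potential value M_k(a).  It satisfies the recursion
  M_k(a) = M_k(a, Pa{M_k}(a)).\<close>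

definition parent_vals :: "(nat \<Rightarrow> nat set) \<Rightarrow> (nat \<Rightarrow> real \<Rightarrow> real) \<Rightarrow> nat \<Rightarrow> real \<Rightarrow> nat \<Rightarrow> real" where
  "parent_vals pa Mpot k a = (\<lambda>j. if j \<in> pa k then Mpot j a else 0)"

definition med_recursion ::
  "nat \<Rightarrow> (nat \<Rightarrow> nat set) \<Rightarrow> (nat \<Rightarrow> real \<Rightarrow> (nat \<Rightarrow> real) \<Rightarrow> real) \<Rightarrow> (nat \<Rightarrow> real \<Rightarrow> real) \<Rightarrow> bool" where
  "med_recursion K pa Mf Mpot \<longleftrightarrow>
     (\<forall>k\<in>{1..K}. \<forall>a\<in>{0,1}. Mpot k a = Mf k a (parent_vals pa Mpot k a))"

definition medvec :: "nat \<Rightarrow> (nat \<Rightarrow> real \<Rightarrow> real) \<Rightarrow> real \<Rightarrow> nat \<Rightarrow> real" where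
  "medvec K Mpot a = (\<lambda>j. if j \<in> {1..K} then Mpot j a else 0)"

definition Ytot :: "(real \<Rightarrow> (nat \<Rightarrow> real) \<Rightarrow> real) \<Rightarrow> nat \<Rightarrow> (nat \<Rightarrow> real \<Rightarrow> real) \<Rightarrow> real \<Rightarrow> real" where
  "Ytot Y K Mpot a = Y a (medvec K Mpot a)"

definition TE :: "(real \<Rightarrow> (nat \<Rightarrow> real) \<Rightarrow> real) \<Rightarrow> nat \<Rightarrow> (nat \<Rightarrow> real \<Rightarrow> real) \<Rightarrow> real" where
  "TE Y K Mpot = Ytot Y K Mpot 1 - Ytot Y K Mpot 0"

definition Yk :: "(real \<Rightarrow> (nat \<Rightarrow> real) \<Rightarrow> real) \<Rightarrow> nat \<Rightarrow> (nat \<Rightarrow> real \<Rightarrow> real) \<Rightarrow> nat \<Rightarrow> real \<Rightarrow> real \<Rightarrow> real" where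
  "Yk Y K Mpot k a m = Y a ((medvec K Mpot a)(k := m))"

definition CDE0 :: "(real \<Rightarrow> (nat \<Rightarrow> real) \<Rightarrow> real) \<Rightarrow> nat \<Rightarrow> (nat \<Rightarrow> real \<Rightarrow> real) \<Rightarrow> nat \<Rightarrow> real" where
  "CDE0 Y K Mpot k = Yk Y K Mpot k 1 0 - Yk Y K Mpot k 0 0"

definition CIE :: "(real \<Rightarrow> (nat \<Rightarrow> real) \<Rightarrow> real) \<Rightarrow> nat \<Rightarrow> (nat \<Rightarrow> real \<Rightarrow> real) \<Rightarrow> nat \<Rightarrow> real \<Rightarrow> real" where
  "CIE Y K Mpot k a = Yk Y K Mpot k a 1 - Yk Y K Mpot k a 0"

definition sCIE :: "(real \<Rightarrow> (nat \<Rightarrow> real) \<Rightarrow> real) \<Rightarrow> nat \<Rightarrow> (nat \<Rightarrow> real \<Rightarrow> real) \<Rightarrow> nat \<Rightarrow> real" where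
  "sCIE Y K Mpot k = Mpot k 1 * CIE Y K Mpot k 1 - Mpot k 0 * CIE Y K Mpot k 0"

end

theory Submission
  imports Defs
begin

text \<open>Since \<open>M\<^sub>k(a)\<close> is binary, \<open>Y(a) = Y\<^sub>k(a, M\<^sub>k(a)) = Y\<^sub>k(a,0) + M\<^sub>k(a) CIE\<^sub>k(a)\<close>,
  and subtracting the cases \<open>a = 1\<close> and \<open>a = 0\<close> gives \<open>TE = CDE\<^sub>k(0) + sCIE\<^sub>k\<close> for every
  single \<open>k\<close>. The corollary is the average of these \<open>K\<close> identities.\<close>

lemma med_recursion_binary:
  assumes "med_recursion K pa Mf Mpot"
    and "\<forall>k\<in>{1..K}. \<forall>a\<in>{0,1}. \<forall>v. Mf k a v \<in> {0, 1}"
    and "k \<in> {1..K}" "a \<in> {0,1}"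
  shows "Mpot k a \<in> {0,1}"
  using assms unfolding med_recursion_def by metis

lemma Yk_own_value:
  assumes "k \<in> {1..K}"
  shows "Yk Y K Mpot k a (Mpot k a) = Ytot Y K Mpot a"
proof -
  have "(medvec K Mpot a)(k := Mpot k a) = medvec K Mpot a"
    using assms by (auto simp: medvec_def)
  then show ?thesis
    unfolding Yk_def Ytot_def by simp
qed

lemma Yk_binary_eq:
  assumes "m \<in> {0,1}"
  shows "Yk Y K Mpot k a m = Yk Y K Mpot k a 0 + m * CIE Y K Mpot k a"
  using assms by (auto simp: CIE_def)

lemma TE_eq_CDE0_plus_sCIE:
  assumes "k \<in> {1..K}" and "Mpot k 0 \<in> {0,1}" "Mpot k 1 \<in> {0,1}"
  shows "TE Y K Mpot = CDE0 Y K Mpot k + sCIE Y K Mpot k"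
proof -
  have Ytot_eq: "Ytot Y K Mpot a = Yk Y K Mpot k a 0 + Mpot k a * CIE Y K Mpot k a"
    if "Mpot k a \<in> {0,1}" for a
    using Yk_own_value[OF assms(1)] Yk_binary_eq[OF that] by metis
  show ?thesis
    unfolding TE_def CDE0_def sCIE_def
    using Ytot_eq[OF assms(2)] Ytot_eq[OF assms(3)] by simp
qed

lemma average_of_constant:
  fixes f :: "nat \<Rightarrow> real"
  assumes "K \<ge> 1" and "\<And>k. k \<in> {1..K} \<Longrightarrow> f k = c"
  shows "(1 / real K) * (\<Sum>k=1..K. f k) = c"
  using assms by simp

theorem corollary1:
  fixes K :: nat
    and pa :: "nat \<Rightarrow> nat set"
    and Mf :: "nat \<Rightarrow> real \<Rightarrow> (nat \<Rightarrow> real) \<Rightarrow> real"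
    and Mpot :: "nat \<Rightarrow> real \<Rightarrow> real"
    and Y :: "real \<Rightarrow> (nat \<Rightarrow> real) \<Rightarrow> real"
  assumes "K \<ge> 1"
    and "is_dag K pa"
    and "\<forall>k\<in>{1..K}. \<forall>a\<in>{0,1}. \<forall>v. Mf k a v \<in> {0, 1}"
    and "med_recursion K pa Mf Mpot"
  shows "TE Y K Mpot =
           (1 / real K) * (\<Sum>k=1..K. CDE0 Y K Mpot k)
         + (1 / real K) * (\<Sum>k=1..K. sCIE Y K Mpot k)"
proof -
  have per_k: "CDE0 Y K Mpot k + sCIE Y K Mpot k = TE Y K Mpot" if "k \<in> {1..K}" for k
    using TE_eq_CDE0_plus_sCIE[OF that] med_recursion_binary[OF assms(4,3) that] by simp
  have "(1 / real K) * (\<Sum>k=1..K. CDE0 Y K Mpot k) + (1 / real K) * (\<Sum>k=1..K. sCIE Y K Mpot k)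
      = (1 / real K) * (\<Sum>k=1..K. CDE0 Y K Mpot k + sCIE Y K Mpot k)"
    by (simp add: sum.distrib distrib_left)
  also have "\<dots> = TE Y K Mpot"
    by (rule average_of_constant[OF assms(1) per_k])
  finally show ?thesis by simp
qed

end
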